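(* For each $i\in\{1,\dots,n\}$ let $D_i\in\mathbb{R}^{d\times m}$, let $\Gamma_i\in\mathbb{R}^{m\times m}$ be diagonal with entries in $\{0,1\}$, let $\mathcal{B}_i(\cdot)$ be the feature-lifting of a linear basis warp, $Z_i$ its regularization matrix and $\mu_i\ge0$, such that $M_i=\mathcal{B}_i(D_i)\Gamma_i\Gamma_i\mathcal{B}_i(D_i)^{\top}+\mu_iZ_i^{\top}Z_i$ is invertible. Let $\mathcal{P}_{III}=\sum_{i=1}^n\big(\Gamma_i-\Gamma_i\mathcal{B}_i(D_i)^{\top}M_i^{-1}\mathcal{B}_i(D_i)\Gamma_i\big)$. Let $D_i'=R_iD_i+t_i\mathbf{1}^{\top}$ for rotations $R_i$ and translations $t_i$, and let $Z_i'$ be the regularization matrix used for the transformed shapes. If for each $i$ there exists an invertible matrix $H_i$ with $\mathcal{B}_i(D_i')=H_i\mathcal{B}_i(D_i)$ and $Z_i'=Z_iH_i^{\top}$, then $\mathcal{P}_{III}$ computed from $(D_i',Z_i')$ equals $\mathcal{P}_{III}$ computed from $(D_i,Z_i)$, and hence the optimal reference shape $S$ of problem (III) (for fixed $\Lambda$ and $\nu$) is the same.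
   Context: Problem (III): given a diagonal $\Lambda\in\mathbb{R}^{d\times d}$ and $\nu\ge0$, $$\min_{W_i\in\mathbb{R}^{l_i\times d},\,S\in\mathbb{R}^{d\times m}}\ \sum_{i=1}^n\|W_i^{\top}\mathcal{B}_i(D_i)\Gamma_i-S\Gamma_i\|_F^2+\sum_{i=1}^n\mu_i\|Z_iW_i\|_F^2+\nu\|S\mathbf{1}\|_2^2\quad\text{s.t.}\quad SS^{\top}=\Lambda.$$ A linear basis warp with feature map $\beta:\mathbb{R}^d\to\mathbb{R}^l$ maps $p\mapsto W^{\top}\beta(p)$; $\mathcal{B}(D)=[\beta(p_1),\dots,\beta(p_m)]$ for $D=[p_1,\dots,p_m]$. $\mathbf{1}\in\mathbb{R}^m$ is the all-ones vector. *)

theory Defs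
  imports "Jordan_Normal_Form.Determinant"
begin

(* Feature lifting of a linear basis warp: B(D) = [beta(p_1),...,beta(p_m)] (an l x m matrix) *)
definition lift :: "nat \<Rightarrow> (real vec \<Rightarrow> real vec) \<Rightarrow> real mat \<Rightarrow> real mat" where
  "lift l \<beta> D = mat l (dim_col D) (\<lambda>(r,c). \<beta> (col D c) $ r)"

definition minv :: "real mat \<Rightarrow> real mat" where
  "minv A = (SOME B. B \<in> carrier_mat (dim_row A) (dim_row A) \<and> inverts_mat A B \<and> inverts_mat B A)"

definition frob2 :: "real mat \<Rightarrow> real" where
  "frob2 A = (\<Sum>r<dim_row A. \<Sum>c<dim_col A. (A $$ (r,c))^2)"

definition rotation_mat :: "nat \<Rightarrow> real mat \<Rightarrow> bool" where
  "rotation_mat d R \<longleftrightarrow> R \<in> carrier_mat d d \<and> transpose_mat R * R = 1\<^sub>m d \<and> det R = 1"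

definition bcast :: "nat \<Rightarrow> real vec \<Rightarrow> real mat" where
  "bcast m t = mat (dim_vec t) m (\<lambda>(r,c). t $ r)"

definition Mmat :: "real mat \<Rightarrow> real mat \<Rightarrow> real \<Rightarrow> real mat \<Rightarrow> real mat" where
  "Mmat B \<Gamma> \<mu> Z = B * \<Gamma> * \<Gamma> * transpose_mat B + \<mu> \<cdot>\<^sub>m (transpose_mat Z * Z)"

definition Pterm :: "real mat \<Rightarrow> real mat \<Rightarrow> real \<Rightarrow> real mat \<Rightarrow> real mat" where
  "Pterm B \<Gamma> \<mu> Z = \<Gamma> - \<Gamma> * transpose_mat B * minv (Mmat B \<Gamma> \<mu> Z) * B * \<Gamma>"

definition PIII :: "nat \<Rightarrow> nat \<Rightarrow> (nat \<Rightarrow> real mat) \<Rightarrow> (nat \<Rightarrow> real mat) \<Rightarrow> (nat \<Rightarrow> real)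
    \<Rightarrow> (nat \<Rightarrow> real mat) \<Rightarrow> real mat" where
  "PIII n m B \<Gamma> \<mu> Z = mat m m (\<lambda>rc. \<Sum>i\<in>{1..n}. Pterm (B i) (\<Gamma> i) (\<mu> i) (Z i) $$ rc)"

(* objective of problem (III); B i = lifted data B_i(D_i) *)
definition objIII :: "nat \<Rightarrow> nat \<Rightarrow> (nat \<Rightarrow> real mat) \<Rightarrow> (nat \<Rightarrow> real mat) \<Rightarrow> (nat \<Rightarrow> real)
    \<Rightarrow> (nat \<Rightarrow> real mat) \<Rightarrow> real \<Rightarrow> (nat \<Rightarrow> real mat) \<Rightarrow> real mat \<Rightarrow> real" where
  "objIII n m B \<Gamma> \<mu> Z \<nu> W S =
     (\<Sum>i\<in>{1..n}. frob2 (transpose_mat (W i) * B i * \<Gamma> i - S * \<Gamma> i))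
   + (\<Sum>i\<in>{1..n}. \<mu> i * frob2 (Z i * W i))
   + \<nu> * (\<Sum>r<dim_row S. (\<Sum>c<m. S $$ (r,c))^2)"

definition feasIII :: "nat \<Rightarrow> nat \<Rightarrow> nat \<Rightarrow> (nat \<Rightarrow> nat) \<Rightarrow> real mat \<Rightarrow> (nat \<Rightarrow> real mat) \<Rightarrow> real mat \<Rightarrow> bool" where
  "feasIII n d m l \<Lambda> W S \<longleftrightarrow> (\<forall>i\<in>{1..n}. W i \<in> carrier_mat (l i) d)
      \<and> S \<in> carrier_mat d m \<and> S * transpose_mat S = \<Lambda>"

definition optS_III :: "nat \<Rightarrow> nat \<Rightarrow> nat \<Rightarrow> (nat \<Rightarrow> nat) \<Rightarrow> (nat \<Rightarrow> real mat) \<Rightarrow> (nat \<Rightarrow> real mat)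
    \<Rightarrow> (nat \<Rightarrow> real) \<Rightarrow> (nat \<Rightarrow> real mat) \<Rightarrow> real mat \<Rightarrow> real \<Rightarrow> real mat set" where
  "optS_III n d m l B \<Gamma> \<mu> Z \<Lambda> \<nu> = {S. \<exists>W. feasIII n d m l \<Lambda> W S \<and>
      (\<forall>W' S'. feasIII n d m l \<Lambda> W' S' \<longrightarrow>
         objIII n m B \<Gamma> \<mu> Z \<nu> W S \<le> objIII n m B \<Gamma> \<mu> Z \<nu> W' S')}"

end

theory Submission
  imports Defs
begin

text \<open>Replacing the lifted data \<open>B\<close> by \<open>H B\<close> and the regulariser \<open>Z\<close> by \<open>Z H\<^sup>T\<close> turns
  \<open>M = B \<Gamma> \<Gamma> B\<^sup>T + \<mu> Z\<^sup>T Z\<close> into \<open>H M H\<^sup>T\<close>, whose inverse is \<open>H\<^sup>-\<^sup>T M\<^sup>-\<^sup>1 H\<^sup>-\<^sup>1\<close>; the factors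
  \<open>H\<close> cancel in \<open>B\<^sup>T M\<^sup>-\<^sup>1 B\<close>, so every summand of \<open>P_III\<close> is unchanged. In problem (III) the
  same substitution is absorbed by the change of variables \<open>W \<mapsto> H\<^sup>T W\<close>, a bijection of the
  feasible set preserving the objective, so the optimal reference shapes coincide. The rotation
  and translation enter only through \<open>H\<close>.\<close>

lemma mult_mat_inverse_cancel:
  fixes A B X :: "'a :: semiring_1 mat"
  assumes "A \<in> carrier_mat n n" "B \<in> carrier_mat n n" "A * B = 1\<^sub>m n" "X \<in> carrier_mat n p"
  shows "A * (B * X) = X"
proof -
  have "A * (B * X) = A * B * X"
    by (simp only: assoc_mult_mat[OF assms(1,2,4)])
  also have "\<dots> = X"
    using assms(3) left_mult_one_mat[OF assms(4)] by simp
  finally show ?thesis .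
qed

text \<open>Side conditions on dimensions rather than carriers let the simplifier discharge them, so this
  rule (used with \<open>assoc_mult_mat\<close> deleted) normalises long products to the left.\<close>

lemma mult_mat_assoc_left:
  "dim_col A = dim_row B \<Longrightarrow> dim_col B = dim_row C \<Longrightarrow> A * (B * C) = A * B * C"
  by (rule assoc_mult_mat[symmetric, of A "dim_row A" "dim_col A" B "dim_col B" C "dim_col C"]) auto

lemma minv_eqI:
  assumes A: "A \<in> carrier_mat n n" and Y: "Y \<in> carrier_mat n n" and AY: "A * Y = 1\<^sub>m n"
  shows "minv A = Y"
  unfolding minv_def
proof (rule some_equality)
  have YA: "Y * A = 1\<^sub>m n" by (rule mat_mult_left_right_inverse[OF A Y AY])
  then show "Y \<in> carrier_mat (dim_row A) (dim_row A) \<and> inverts_mat A Y \<and> inverts_mat Y A"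
    using A Y AY unfolding inverts_mat_def by auto
next
  fix B assume "B \<in> carrier_mat (dim_row A) (dim_row A) \<and> inverts_mat A B \<and> inverts_mat B A"
  then have B: "B \<in> carrier_mat n n" and BA: "B * A = 1\<^sub>m n"
    using A unfolding inverts_mat_def by auto
  show "B = Y"
    using mult_mat_inverse_cancel[OF B A BA Y] B by (simp add: AY)
qed

lemma minv_mat:
  assumes A: "A \<in> carrier_mat n n" and "invertible_mat A"
  shows "minv A \<in> carrier_mat n n" "A * minv A = 1\<^sub>m n" "minv A * A = 1\<^sub>m n"
proof -
  obtain B where AB: "A * B = 1\<^sub>m n" and BA: "B * A = 1\<^sub>m (dim_row B)"
    using assms unfolding invertible_mat_def inverts_mat_def by auto
  have B: "B \<in> carrier_mat n n"
    using AB BA A by (metis carrier_matD carrier_matI index_mult_mat(2,3) index_one_mat(2,3))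
  have "minv A = B" by (rule minv_eqI[OF A B AB])
  then show "minv A \<in> carrier_mat n n" "A * minv A = 1\<^sub>m n" "minv A * A = 1\<^sub>m n"
    using B AB BA by auto
qed

lemma minv_congruence:
  assumes M: "M \<in> carrier_mat n n" "invertible_mat M"
    and H: "H \<in> carrier_mat n n" "invertible_mat H"
  shows "minv (H * M * transpose_mat H) = transpose_mat (minv H) * minv M * minv H"
proof (rule minv_eqI)
  note Mv = minv_mat[OF M] and Hv = minv_mat[OF H]
  have HT: "transpose_mat H * transpose_mat (minv H) = 1\<^sub>m n"
    using transpose_mult[OF Hv(1) H(1)] Hv(3) by simp
  show "H * M * transpose_mat H * (transpose_mat (minv H) * minv M * minv H) = 1\<^sub>m n"
    using M(1) H(1) Mv(1) Hv(1)
    by (simp add: assoc_mult_mat[of _ n n _ n _ n] Hv(2)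
        mult_mat_inverse_cancel[of "transpose_mat H" n "transpose_mat (minv H)" _ n, OF _ _ HT]
        mult_mat_inverse_cancel[of M n "minv M" _ n, OF _ _ Mv(2)])
qed (use M H minv_mat[OF M] minv_mat[OF H] in auto)

lemma Mmat_change_basis:
  assumes B: "B \<in> carrier_mat l m" and \<Gamma>: "\<Gamma> \<in> carrier_mat m m"
    and Z: "Z \<in> carrier_mat k l" and H: "H \<in> carrier_mat l l"
  shows "Mmat (H * B) \<Gamma> \<mu> (Z * transpose_mat H) = H * Mmat B \<Gamma> \<mu> Z * transpose_mat H"
proof -
  have BB: "B * \<Gamma> * \<Gamma> * transpose_mat B \<in> carrier_mat l l" and ZZ: "transpose_mat Z * Z \<in> carrier_mat l l"
    using B \<Gamma> Z by auto
  have "H * Mmat B \<Gamma> \<mu> Z * transpose_mat H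
      = H * (B * \<Gamma> * \<Gamma> * transpose_mat B) * transpose_mat H + \<mu> \<cdot>\<^sub>m (H * (transpose_mat Z * Z) * transpose_mat H)"
    unfolding Mmat_def using H BB ZZ
    by (simp add: mult_add_distrib_mat[OF H] add_mult_distrib_mat[of _ l l _ _ l] mult_smult_distrib[OF H]
        mult_smult_assoc_mat[of _ l l _ l])
  also have "\<dots> = Mmat (H * B) \<Gamma> \<mu> (Z * transpose_mat H)"
    unfolding Mmat_def using B \<Gamma> Z H
    by (simp add: transpose_mult[OF H B] transpose_mult[OF Z, of _ l] mult_mat_assoc_left del: assoc_mult_mat)
  finally show ?thesis ..
qed

lemma Pterm_change_basis:
  assumes B: "B \<in> carrier_mat l m" and \<Gamma>: "\<Gamma> \<in> carrier_mat m m" and Z: "Z \<in> carrier_mat k l"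
    and H: "H \<in> carrier_mat l l" "invertible_mat H" and M: "invertible_mat (Mmat B \<Gamma> \<mu> Z)"
  shows "Pterm (H * B) \<Gamma> \<mu> (Z * transpose_mat H) = Pterm B \<Gamma> \<mu> Z"
proof -
  define M where "M = Mmat B \<Gamma> \<mu> Z"
  have Mc: "M \<in> carrier_mat l l"
    unfolding M_def Mmat_def using B \<Gamma> Z by auto
  note Hv = minv_mat[OF H] and Mv = minv_mat[OF Mc M[folded M_def]]
  have HT: "transpose_mat H * transpose_mat (minv H) = 1\<^sub>m l"
    using transpose_mult[OF Hv(1) H(1)] Hv(3) by simp
  have "\<Gamma> * transpose_mat (H * B) * minv (H * M * transpose_mat H) * (H * B) * \<Gamma>
      = \<Gamma> * transpose_mat B * (transpose_mat H * transpose_mat (minv H)) * minv M * (minv H * H) * B * \<Gamma>"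
    using B \<Gamma> H(1) Hv(1) Mv(1)
    by (simp add: minv_congruence[OF Mc M[folded M_def] H] transpose_mult[OF H(1) B] mult_mat_assoc_left
        del: assoc_mult_mat)
  also have "\<dots> = \<Gamma> * transpose_mat B * minv M * B * \<Gamma>"
    using B \<Gamma> Mv(1) by (simp add: HT Hv(3) del: assoc_mult_mat)
  finally show ?thesis
    unfolding Pterm_def Mmat_change_basis[OF B \<Gamma> Z H(1)] M_def by simp
qed

lemma PIII_change_basis:
  assumes B: "\<And>i. i \<in> {1..n} \<Longrightarrow> B i \<in> carrier_mat (l i) m"
    and \<Gamma>: "\<And>i. i \<in> {1..n} \<Longrightarrow> \<Gamma> i \<in> carrier_mat m m"
    and Z: "\<And>i. i \<in> {1..n} \<Longrightarrow> Z i \<in> carrier_mat (k i) (l i)"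
    and H: "\<And>i. i \<in> {1..n} \<Longrightarrow> H i \<in> carrier_mat (l i) (l i) \<and> invertible_mat (H i)"
    and M: "\<And>i. i \<in> {1..n} \<Longrightarrow> invertible_mat (Mmat (B i) (\<Gamma> i) (\<mu> i) (Z i))"
    and B': "\<And>i. i \<in> {1..n} \<Longrightarrow> B' i = H i * B i"
    and Z': "\<And>i. i \<in> {1..n} \<Longrightarrow> Z' i = Z i * transpose_mat (H i)"
  shows "PIII n m B' \<Gamma> \<mu> Z' = PIII n m B \<Gamma> \<mu> Z"
proof -
  have "Pterm (B' i) (\<Gamma> i) (\<mu> i) (Z' i) = Pterm (B i) (\<Gamma> i) (\<mu> i) (Z i)" if i: "i \<in> {1..n}" for i
    unfolding B'[OF i] Z'[OF i] using H[OF i]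
    by (intro Pterm_change_basis[OF B[OF i] \<Gamma>[OF i] Z[OF i] _ _ M[OF i]]) auto
  then show ?thesis
    unfolding PIII_def by (intro cong_mat refl sum.cong) auto
qed

lemma objIII_cong:
  assumes "\<And>i. i \<in> {1..n} \<Longrightarrow> W i = W' i"
  shows "objIII n m B \<Gamma> \<mu> Z \<nu> W S = objIII n m B \<Gamma> \<mu> Z \<nu> W' S"
  unfolding objIII_def using assms by simp

lemma objIII_change_basis:
  assumes W: "\<And>i. i \<in> {1..n} \<Longrightarrow> W i \<in> carrier_mat (l i) d"
    and B: "\<And>i. i \<in> {1..n} \<Longrightarrow> B i \<in> carrier_mat (l i) m"
    and Z: "\<And>i. i \<in> {1..n} \<Longrightarrow> Z i \<in> carrier_mat (k i) (l i)"
    and H: "\<And>i. i \<in> {1..n} \<Longrightarrow> H i \<in> carrier_mat (l i) (l i)"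
    and B': "\<And>i. i \<in> {1..n} \<Longrightarrow> B' i = H i * B i"
    and Z': "\<And>i. i \<in> {1..n} \<Longrightarrow> Z' i = Z i * transpose_mat (H i)"
  shows "objIII n m B' \<Gamma> \<mu> Z' \<nu> W S = objIII n m B \<Gamma> \<mu> Z \<nu> (\<lambda>i. transpose_mat (H i) * W i) S"
proof -
  have "transpose_mat (W i) * B' i = transpose_mat (transpose_mat (H i) * W i) * B i"
    and "Z' i * W i = Z i * (transpose_mat (H i) * W i)" if i: "i \<in> {1..n}" for i
    using W[OF i] B[OF i] Z[OF i] H[OF i]
    by (simp_all add: B'[OF i] Z'[OF i] transpose_mult[OF _ W[OF i]])
  then show ?thesis
    unfolding objIII_def by (intro arg_cong2[where f = "(+)"] sum.cong refl) auto
qed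

definition argmin_snd :: "('w \<Rightarrow> 's \<Rightarrow> bool) \<Rightarrow> ('w \<Rightarrow> 's \<Rightarrow> 'c :: preorder) \<Rightarrow> 's set" where
  "argmin_snd feas obj = {S. \<exists>W. feas W S \<and> (\<forall>W' S'. feas W' S' \<longrightarrow> obj W S \<le> obj W' S')}"

lemma optS_III_eq_argmin_snd:
  "optS_III n d m l B \<Gamma> \<mu> Z \<Lambda> \<nu> = argmin_snd (feasIII n d m l \<Lambda>) (objIII n m B \<Gamma> \<mu> Z \<nu>)"
  unfolding optS_III_def argmin_snd_def ..

lemma argmin_snd_subset:
  assumes f: "\<And>W S. feas W S \<Longrightarrow> feas (f W) S \<and> obj (f W) S = obj' W S"
    and g: "\<And>W S. feas W S \<Longrightarrow> feas (g W) S \<and> obj' (g W) S = obj W S"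
  shows "argmin_snd feas obj' \<subseteq> argmin_snd feas obj"
proof
  fix S assume "S \<in> argmin_snd feas obj'"
  then obtain W where W: "feas W S" and min: "\<And>W' S'. feas W' S' \<Longrightarrow> obj' W S \<le> obj' W' S'"
    unfolding argmin_snd_def by blast
  have "obj (f W) S \<le> obj W' S'" if "feas W' S'" for W' S'
  proof -
    have "obj (f W) S = obj' W S" using f[OF W] by simp
    also have "\<dots> \<le> obj' (g W') S'" using min g[OF that] by blast
    also have "\<dots> = obj W' S'" using g[OF that] by simp
    finally show ?thesis .
  qed
  then show "S \<in> argmin_snd feas obj"
    unfolding argmin_snd_def using f[OF W] by blast
qed

lemma optS_III_change_basis:
  assumes B: "\<And>i. i \<in> {1..n} \<Longrightarrow> B i \<in> carrier_mat (l i) m"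
    and Z: "\<And>i. i \<in> {1..n} \<Longrightarrow> Z i \<in> carrier_mat (k i) (l i)"
    and H: "\<And>i. i \<in> {1..n} \<Longrightarrow> H i \<in> carrier_mat (l i) (l i) \<and> invertible_mat (H i)"
    and B': "\<And>i. i \<in> {1..n} \<Longrightarrow> B' i = H i * B i"
    and Z': "\<And>i. i \<in> {1..n} \<Longrightarrow> Z' i = Z i * transpose_mat (H i)"
  shows "optS_III n d m l B' \<Gamma> \<mu> Z' \<Lambda> \<nu> = optS_III n d m l B \<Gamma> \<mu> Z \<Lambda> \<nu>"
proof -
  define f where "f W = (\<lambda>i. transpose_mat (H i) * W i)" for W :: "nat \<Rightarrow> real mat"
  define g where "g W = (\<lambda>i. transpose_mat (minv (H i)) * W i)" for W :: "nat \<Rightarrow> real mat"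
  have Hv: "minv (H i) \<in> carrier_mat (l i) (l i)"
    and HT: "transpose_mat (H i) * transpose_mat (minv (H i)) = 1\<^sub>m (l i)" if i: "i \<in> {1..n}" for i
    using minv_mat[of "H i" "l i"] H[OF i] transpose_mult[of "minv (H i)" "l i" "l i" "H i" "l i"] by auto
  have "transpose_mat (H i) * X \<in> carrier_mat (l i) d"
    and "transpose_mat (minv (H i)) * X \<in> carrier_mat (l i) d"
    if "i \<in> {1..n}" "X \<in> carrier_mat (l i) d" for i X
    using that H Hv by (auto intro!: mult_carrier_mat[of _ "l i" "l i"])
  then have feas_f: "feasIII n d m l \<Lambda> (f W) S" and feas_g: "feasIII n d m l \<Lambda> (g W) S"
    if "feasIII n d m l \<Lambda> W S" for W S
    using that unfolding feasIII_def f_def g_def by auto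
  have obj_f: "objIII n m B' \<Gamma> \<mu> Z' \<nu> W S = objIII n m B \<Gamma> \<mu> Z \<nu> (f W) S"
    if "feasIII n d m l \<Lambda> W S" for W S
    unfolding f_def using that H
    by (intro objIII_change_basis[OF _ B Z _ B' Z']) (auto simp: feasIII_def)
  have obj_g: "objIII n m B' \<Gamma> \<mu> Z' \<nu> (g W) S = objIII n m B \<Gamma> \<mu> Z \<nu> W S"
    if W: "feasIII n d m l \<Lambda> W S" for W S
  proof -
    have "f (g W) i = W i" if i: "i \<in> {1..n}" for i
    proof -
      have "W i \<in> carrier_mat (l i) d"
        using W i unfolding feasIII_def by auto
      then show ?thesis
        unfolding f_def g_def using H[OF i] Hv[OF i] by (simp add: mult_mat_inverse_cancel[OF _ _ HT[OF i]])
    qed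
    then show ?thesis
      using obj_f[OF feas_g[OF W]] objIII_cong by metis
  qed
  note transfer = feas_f feas_g obj_f[symmetric] obj_g
  show ?thesis
    unfolding optS_III_eq_argmin_snd
  proof (rule subset_antisym)
    show "argmin_snd (feasIII n d m l \<Lambda>) (objIII n m B' \<Gamma> \<mu> Z' \<nu>)
        \<subseteq> argmin_snd (feasIII n d m l \<Lambda>) (objIII n m B \<Gamma> \<mu> Z \<nu>)"
      by (rule argmin_snd_subset[where f = f and g = g]) (simp_all add: transfer)
    show "argmin_snd (feasIII n d m l \<Lambda>) (objIII n m B \<Gamma> \<mu> Z \<nu>)
        \<subseteq> argmin_snd (feasIII n d m l \<Lambda>) (objIII n m B' \<Gamma> \<mu> Z' \<nu>)"
      by (rule argmin_snd_subset[where f = g and g = f]) (simp_all add: transfer)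
  qed
qed

theorem lemma6:
  fixes n d m :: nat and l k :: "nat \<Rightarrow> nat"
    and D \<Gamma> Z Z' R H :: "nat \<Rightarrow> real mat" and t :: "nat \<Rightarrow> real vec"
    and \<beta> :: "nat \<Rightarrow> real vec \<Rightarrow> real vec" and \<mu> :: "nat \<Rightarrow> real"
  assumes D: "\<And>i. i \<in> {1..n} \<Longrightarrow> D i \<in> carrier_mat d m"
    and Gam: "\<And>i. i \<in> {1..n} \<Longrightarrow> \<Gamma> i \<in> carrier_mat m m \<and> diagonal_mat (\<Gamma> i)
                 \<and> (\<forall>j<m. \<Gamma> i $$ (j,j) \<in> {0,1})"
    and beta: "\<And>i p. i \<in> {1..n} \<Longrightarrow> p \<in> carrier_vec d \<Longrightarrow> \<beta> i p \<in> carrier_vec (l i)"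
    and Z: "\<And>i. i \<in> {1..n} \<Longrightarrow> Z i \<in> carrier_mat (k i) (l i)"
    and mu: "\<And>i. i \<in> {1..n} \<Longrightarrow> \<mu> i \<ge> 0"
    and M_inv: "\<And>i. i \<in> {1..n} \<Longrightarrow>
                  invertible_mat (Mmat (lift (l i) (\<beta> i) (D i)) (\<Gamma> i) (\<mu> i) (Z i))"
    and R: "\<And>i. i \<in> {1..n} \<Longrightarrow> rotation_mat d (R i)"
    and t: "\<And>i. i \<in> {1..n} \<Longrightarrow> t i \<in> carrier_vec d"
    and H: "\<And>i. i \<in> {1..n} \<Longrightarrow> H i \<in> carrier_mat (l i) (l i) \<and> invertible_mat (H i)
              \<and> lift (l i) (\<beta> i) (R i * D i + bcast m (t i)) = H i * lift (l i) (\<beta> i) (D i)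
              \<and> Z' i = Z i * transpose_mat (H i)"
  shows "PIII n m (\<lambda>i. lift (l i) (\<beta> i) (R i * D i + bcast m (t i))) \<Gamma> \<mu> Z'
           = PIII n m (\<lambda>i. lift (l i) (\<beta> i) (D i)) \<Gamma> \<mu> Z
         \<and> (\<forall>\<Lambda> (\<nu>::real). \<Lambda> \<in> carrier_mat d d \<longrightarrow> diagonal_mat \<Lambda> \<longrightarrow> \<nu> \<ge> 0 \<longrightarrow>
              optS_III n d m l (\<lambda>i. lift (l i) (\<beta> i) (R i * D i + bcast m (t i))) \<Gamma> \<mu> Z' \<Lambda> \<nu>
              = optS_III n d m l (\<lambda>i. lift (l i) (\<beta> i) (D i)) \<Gamma> \<mu> Z \<Lambda> \<nu>)"
proof (intro conjI allI impI)
  have B: "lift (l i) (\<beta> i) (D i) \<in> carrier_mat (l i) m" if "i \<in> {1..n}" for i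
    using D[OF that] unfolding lift_def by auto
  show "PIII n m (\<lambda>i. lift (l i) (\<beta> i) (R i * D i + bcast m (t i))) \<Gamma> \<mu> Z'
      = PIII n m (\<lambda>i. lift (l i) (\<beta> i) (D i)) \<Gamma> \<mu> Z"
    using B Gam Z H M_inv by (intro PIII_change_basis[where H = H and l = l and k = k]) auto
  fix \<Lambda> \<nu>
  show "optS_III n d m l (\<lambda>i. lift (l i) (\<beta> i) (R i * D i + bcast m (t i))) \<Gamma> \<mu> Z' \<Lambda> \<nu>
      = optS_III n d m l (\<lambda>i. lift (l i) (\<beta> i) (D i)) \<Gamma> \<mu> Z \<Lambda> \<nu>"
    using B Z H by (intro optS_III_change_basis[where H = H and l = l and k = k]) auto
qed

end
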